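(* In the setting where $X_N\in\mathbb{R}^{N\times M}$ (rows $x_n^\top$), $Y_N\in\mathbb{R}^N$, $x\in\mathbb{R}^M$, $\lambda>0$, $\sigma>0$, $w(\theta)=\exp\{-\frac{\lambda}{2\sigma^2}\|\theta\|^2\}$, $P_\lambda=(X_N^\top X_N+\lambda I)^{-1}$, $K_\lambda=1+x^\top P_\lambda x$, $\hat\theta_\lambda=P_\lambda X_N^\top Y_N$, and $\hat\theta_y=\arg\min_\theta\big[\sum_{n}(y_n-\theta^\top x_n)^2+(y-\theta^\top x)^2+\lambda\|\theta\|^2\big]$, the LpNML distribution $$q_{\mathrm{LpNML}}(y\mid x)=\frac{p_{\hat\theta_y}(y\mid x)\,w(\hat\theta_y)}{\int_{\mathbb{R}}p_{\hat\theta_{y'}}(y'\mid x)\,w(\hat\theta_{y'})\,dy'}$$ is the Gaussian $\mathcal{N}\big(\hat\theta_\lambda^\top x-\hat\mu,\ \hat\sigma^2\big)$, where $$\hat\mu=\frac{\lambda K_\lambda\,\hat\theta_\lambda^\top P_\lambda x}{1+\lambda x^\top P_\lambda^2x},\qquad \hat\sigma^2=\frac{\sigma^2K_\lambda^2}{1+\lambda x^\top P_\lambda^2x}.$$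
   Context: $p_\theta(y\mid x)=\frac{1}{\sqrt{2\pi\sigma^2}}\exp\{-\frac{1}{2\sigma^2}(y-\theta^\top x)^2\}$. *)

theory Defs
  imports "HOL-Probability.Probability"
begin

definition gauss_model :: "real \<Rightarrow> real ^ 'm \<Rightarrow> real \<Rightarrow> real ^ 'm \<Rightarrow> real" where
  "gauss_model \<sigma> \<theta> y x = 1 / sqrt (2 * pi * \<sigma>\<^sup>2) * exp (- (1 / (2 * \<sigma>\<^sup>2)) * (y - \<theta> \<bullet> x)\<^sup>2)"

definition prior_w :: "real \<Rightarrow> real \<Rightarrow> real ^ 'm \<Rightarrow> real" where
  "prior_w lam \<sigma> \<theta> = exp (- (lam / (2 * \<sigma>\<^sup>2)) * (norm \<theta>)\<^sup>2)"

definition ridge_obj :: "real ^ 'm ^ 'n \<Rightarrow> real ^ 'n \<Rightarrow> real ^ 'm \<Rightarrow> real \<Rightarrow> real \<Rightarrow> real ^ 'm \<Rightarrow> real" where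
  "ridge_obj X Y x y lam \<theta> =
     (\<Sum>n\<in>UNIV. (Y $ n - \<theta> \<bullet> (X $ n))\<^sup>2) + (y - \<theta> \<bullet> x)\<^sup>2 + lam * (norm \<theta>)\<^sup>2"

definition theta_y :: "real ^ 'm ^ 'n \<Rightarrow> real ^ 'n \<Rightarrow> real ^ 'm \<Rightarrow> real \<Rightarrow> real \<Rightarrow> real ^ 'm" where
  "theta_y X Y x y lam = (SOME \<theta>. \<forall>\<theta>'. ridge_obj X Y x y lam \<theta> \<le> ridge_obj X Y x y lam \<theta>')"

definition q_LpNML :: "real ^ 'm ^ 'n \<Rightarrow> real ^ 'n \<Rightarrow> real \<Rightarrow> real \<Rightarrow> real ^ 'm \<Rightarrow> real \<Rightarrow> real" where
  "q_LpNML X Y lam \<sigma> x y =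
     gauss_model \<sigma> (theta_y X Y x y lam) y x * prior_w lam \<sigma> (theta_y X Y x y lam) /
     (LBINT y'. gauss_model \<sigma> (theta_y X Y x y' lam) y' x * prior_w lam \<sigma> (theta_y X Y x y' lam))"

end

theory Submission
  imports Defs
begin

text \<open>The minimiser of the augmented ridge objective moves along the fixed direction
  \<open>P x\<close> as the label \<open>y\<close> varies: \<open>\<theta>\<^sub>y = \<theta>\<^sub>\<lambda> + (y - \<theta>\<^sub>\<lambda>\<^sup>T x)/K \<cdot> P x\<close> (a Sherman--Morrison update).
  Along this line both the residual \<open>y - \<theta>\<^sub>y\<^sup>T x = (y - \<theta>\<^sub>\<lambda>\<^sup>T x)/K\<close> and \<open>\<parallel>\<theta>\<^sub>y\<parallel>\<^sup>2\<close> are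
  quadratic in \<open>y\<close>, so the unnormalised LpNML density is the exponential of a quadratic;
  completing the square shows that it is a constant multiple of a normal density, and
  normalising removes the constant.\<close>

definition ridge_gram :: "real ^ 'm ^ 'n \<Rightarrow> real \<Rightarrow> real ^ 'm ^ 'm" where
  "ridge_gram X lam = transpose X ** X + lam *\<^sub>R mat 1"

lemma matrix_inv_mult:
  fixes A :: "real ^ 'n ^ 'n"
  assumes "invertible A"
  shows "A ** matrix_inv A = mat 1" and "matrix_inv A ** A = mat 1"
proof -
  have "A ** matrix_inv A = mat 1 \<and> matrix_inv A ** A = mat 1"
    using assms unfolding matrix_inv_def invertible_def by (rule someI_ex)
  then show "A ** matrix_inv A = mat 1" and "matrix_inv A ** A = mat 1" by auto
qed

lemma transpose_matrix_inv_symmetric: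
  fixes A :: "real ^ 'n ^ 'n"
  assumes "invertible A" and "transpose A = A"
  shows "transpose (matrix_inv A) = matrix_inv A"
proof -
  have "A ** transpose (matrix_inv A) = mat 1"
    using matrix_inv_mult(2)[OF assms(1)] assms(2) by (metis matrix_transpose_mul transpose_mat)
  then show ?thesis
    using matrix_inv_mult[OF assms(1)] by (metis matrix_mul_assoc matrix_mul_lid matrix_mul_rid)
qed

lemma inner_matrix_inv_symmetric:
  fixes A :: "real ^ 'n ^ 'n"
  assumes "invertible A" and "transpose A = A"
  shows "(matrix_inv A *v u) \<bullet> v = u \<bullet> (matrix_inv A *v v)"
  by (metis dot_lmul_matrix transpose_matrix_inv_symmetric[OF assms] transpose_matrix_vector)

lemma ridge_gram_mult_vec: "ridge_gram X lam *v v = (X *v v) v* X + lam *\<^sub>R v"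
proof -
  have "(lam *\<^sub>R mat 1) *v v = lam *\<^sub>R v"
    by (simp add: vec_eq_iff matrix_vector_mult_def mat_def if_distrib if_distribR cong: if_cong)
  then show ?thesis
    unfolding ridge_gram_def
    by (simp add: matrix_vector_mult_add_rdistrib matrix_vector_mul_assoc[symmetric])
qed

lemma inner_ridge_gram: "v \<bullet> (ridge_gram X lam *v v) = (X *v v) \<bullet> (X *v v) + lam * (v \<bullet> v)"
  by (simp add: ridge_gram_mult_vec inner_add_right dot_lmul_matrix inner_commute[of v "_ v* X"])

lemma inner_ridge_gram_nonneg: "lam \<ge> 0 \<Longrightarrow> v \<bullet> (ridge_gram X lam *v v) \<ge> 0"
  by (simp add: inner_ridge_gram)

lemma transpose_ridge_gram: "transpose (ridge_gram X lam) = ridge_gram X lam"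
  unfolding ridge_gram_def
  by (simp add: vec_eq_iff transpose_def matrix_matrix_mult_def mat_def mult.commute)

lemma invertible_ridge_gram:
  assumes "lam > 0"
  shows "invertible (ridge_gram X lam)"
proof -
  have "v = 0" if "ridge_gram X lam *v v = 0" for v
  proof -
    have "(X *v v) \<bullet> (X *v v) + lam * (v \<bullet> v) = 0"
      using that inner_ridge_gram[of v X lam] by simp
    then have "lam * (v \<bullet> v) = 0"
      using assms by (smt (verit) inner_ge_zero mult_nonneg_nonneg)
    then show "v = 0" using assms by simp
  qed
  then show ?thesis
    using matrix_left_invertible_ker invertible_left_inverse by blast
qed

lemma ridge_gram_inv_cancel:
  assumes "lam > 0"
  shows "ridge_gram X lam *v (matrix_inv (ridge_gram X lam) *v v) = v"
  using matrix_inv_mult(1)[OF invertible_ridge_gram[OF assms, of X]]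
  by (simp add: matrix_vector_mul_assoc)

lemma inner_ridge_gram_inv_nonneg:
  assumes "lam > 0"
  shows "x \<bullet> (matrix_inv (ridge_gram X lam) *v x) \<ge> 0"
proof -
  define p where "p = matrix_inv (ridge_gram X lam) *v x"
  have "x \<bullet> p = p \<bullet> (ridge_gram X lam *v p)"
    unfolding p_def ridge_gram_inv_cancel[OF assms] by (simp add: inner_commute)
  then show ?thesis
    using inner_ridge_gram_nonneg[of lam p X] assms unfolding p_def by simp
qed

lemma inner_ridge_gram_inv_square:
  fixes X :: "real ^ 'm ^ 'n"
  assumes "lam > 0"
  defines "P \<equiv> matrix_inv (ridge_gram X lam)"
  shows "x \<bullet> ((P ** P) *v x) = (P *v x) \<bullet> (P *v x)"
  using inner_matrix_inv_symmetric[OF invertible_ridge_gram[OF assms(1), of X] transpose_ridge_gram,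
      where u = x and v = "P *v x"]
  unfolding P_def by (simp add: matrix_vector_mul_assoc[symmetric])

lemma ridge_obj_inner:
  "ridge_obj X Y x y lam \<theta> = (Y - X *v \<theta>) \<bullet> (Y - X *v \<theta>) + (y - \<theta> \<bullet> x)\<^sup>2 + lam * (\<theta> \<bullet> \<theta>)"
proof -
  have "(\<Sum>n\<in>UNIV. (Y $ n - \<theta> \<bullet> (X $ n))\<^sup>2) = (Y - X *v \<theta>) \<bullet> (Y - X *v \<theta>)"
    unfolding inner_vec_def[of "Y - X *v \<theta>"]
    by (simp add: matrix_vector_mul_component power2_eq_square inner_commute[of \<theta>])
  then show ?thesis
    unfolding ridge_obj_def by (simp add: power2_norm_eq_inner)
qed

text \<open>Minus one half of the gradient of \<open>ridge_obj\<close>.\<close>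
definition ridge_grad :: "real ^ 'm ^ 'n \<Rightarrow> real ^ 'n \<Rightarrow> real ^ 'm \<Rightarrow> real \<Rightarrow> real \<Rightarrow> real ^ 'm \<Rightarrow> real ^ 'm" where
  "ridge_grad X Y x y lam \<theta> = (Y - X *v \<theta>) v* X + (y - \<theta> \<bullet> x) *\<^sub>R x - lam *\<^sub>R \<theta>"

lemma ridge_obj_add:
  "ridge_obj X Y x y lam (t + d) = ridge_obj X Y x y lam t - 2 * (ridge_grad X Y x y lam t \<bullet> d)
     + ((X *v d) \<bullet> (X *v d) + (d \<bullet> x)\<^sup>2 + lam * (d \<bullet> d))"
proof -
  define e where "e = Y - X *v t"
  have 1: "Y - X *v (t + d) = e - X *v d"
    unfolding e_def by (simp add: matrix_vector_right_distrib)
  have 2: "ridge_grad X Y x y lam t \<bullet> d = e \<bullet> (X *v d) + (y - t \<bullet> x) * (x \<bullet> d) - lam * (t \<bullet> d)"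
    unfolding ridge_grad_def e_def[symmetric]
    by (simp add: inner_add_left inner_diff_left dot_lmul_matrix)
  have 3: "(e - X *v d) \<bullet> (e - X *v d) = e \<bullet> e - 2 * (e \<bullet> (X *v d)) + (X *v d) \<bullet> (X *v d)"
    by (simp add: inner_diff_left inner_diff_right inner_commute[of "X *v d" e])
  have 4: "(t + d) \<bullet> (t + d) = t \<bullet> t + 2 * (t \<bullet> d) + d \<bullet> d"
    by (simp add: inner_add_left inner_add_right inner_commute[of d t])
  have 5: "(y - (t + d) \<bullet> x)\<^sup>2 = (y - t \<bullet> x)\<^sup>2 - 2 * ((y - t \<bullet> x) * (x \<bullet> d)) + (d \<bullet> x)\<^sup>2"
    by (simp add: inner_add_left inner_commute[of x d] power2_eq_square algebra_simps)
  show ?thesis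
    unfolding ridge_obj_inner 1 5 3 4 e_def[symmetric] 2 by (simp add: algebra_simps)
qed

lemma theta_y_eq_stationary:
  assumes "lam > 0" and "ridge_grad X Y x y lam t = 0"
  shows "theta_y X Y x y lam = t"
proof -
  have growth: "ridge_obj X Y x y lam t + lam * ((s - t) \<bullet> (s - t)) \<le> ridge_obj X Y x y lam s" for s
    using ridge_obj_add[of X Y x y lam t "s - t"] assms(2) by simp
  have min: "ridge_obj X Y x y lam t \<le> ridge_obj X Y x y lam s" for s
    using growth[of s] assms(1) by (smt (verit) inner_ge_zero mult_nonneg_nonneg)
  show ?thesis
    unfolding theta_y_def
  proof (rule some_equality)
    show "\<forall>s. ridge_obj X Y x y lam t \<le> ridge_obj X Y x y lam s" using min by blast
  next
    fix s assume "\<forall>s'. ridge_obj X Y x y lam s \<le> ridge_obj X Y x y lam s'"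
    then have "lam * ((s - t) \<bullet> (s - t)) \<le> 0"
      using growth[of s] by (smt (verit))
    then have "(s - t) \<bullet> (s - t) = 0"
      using assms(1) by (smt (verit) inner_ge_zero mult_pos_pos)
    then show "s = t" by simp
  qed
qed

lemma theta_y_ridge_closed_form:
  fixes X :: "real ^ 'm ^ 'n" and Y :: "real ^ 'n" and x :: "real ^ 'm"
  assumes "lam > 0"
  defines "P \<equiv> matrix_inv (ridge_gram X lam)"
  defines "\<theta>L \<equiv> P *v (transpose X *v Y)"
  defines "K \<equiv> 1 + x \<bullet> (P *v x)"
  shows "theta_y X Y x y lam = \<theta>L + ((y - \<theta>L \<bullet> x) / K) *\<^sub>R (P *v x)"
proof (rule theta_y_eq_stationary[OF assms(1)])
  define A where "A = ridge_gram X lam"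
  define c where "c = (y - \<theta>L \<bullet> x) / K"
  define t where "t = \<theta>L + c *\<^sub>R (P *v x)"
  have "K \<ge> 1"
    unfolding K_def P_def using inner_ridge_gram_inv_nonneg[OF assms(1)] by simp
  then have cK: "c * K = y - \<theta>L \<bullet> x"
    unfolding c_def by simp
  have A_t: "A *v t = Y v* X + c *\<^sub>R x"
    unfolding t_def A_def \<theta>L_def P_def
    by (simp add: matrix_vector_right_distrib matrix_vector_mult_scaleR ridge_gram_inv_cancel[OF assms(1)])
  have t_x: "t \<bullet> x = \<theta>L \<bullet> x + c * (K - 1)"
    unfolding t_def K_def by (simp add: inner_add_left inner_commute[of "P *v x" x])
  have "(Y - X *v t) v* X = Y v* X - (A *v t - lam *\<^sub>R t)"
    unfolding A_def by (simp add: ridge_gram_mult_vec vector_matrix_mult_diff_distrib)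
  also have "\<dots> = lam *\<^sub>R t - c *\<^sub>R x"
    unfolding A_t by simp
  finally have "ridge_grad X Y x y lam t = (y - t \<bullet> x - c) *\<^sub>R x"
    unfolding ridge_grad_def by (simp add: algebra_simps)
  also have "y - t \<bullet> x - c = 0"
    unfolding t_x using cK by (simp add: algebra_simps)
  finally show "ridge_grad X Y x y lam (\<theta>L + ((y - \<theta>L \<bullet> x) / K) *\<^sub>R (P *v x)) = 0"
    unfolding t_def c_def by simp
qed

lemma complete_square_exponent:
  fixes K D sg lam r B p2 T :: real
  assumes "K \<noteq> 0" and "D = 1 + lam * p2" and "D \<noteq> 0" and "sg \<noteq> 0"
  shows "- (1 / (2 * sg\<^sup>2)) * (r / K)\<^sup>2 + - (lam / (2 * sg\<^sup>2)) * (T + 2 * (r / K) * B + (r / K)\<^sup>2 * p2)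
     = - (r + lam * K * B / D)\<^sup>2 / (2 * (sg\<^sup>2 * K\<^sup>2 / D))
       + (- (lam / (2 * sg\<^sup>2)) * T + lam\<^sup>2 * B\<^sup>2 / (2 * sg\<^sup>2 * D))"
proof -
  have 1: "- (r + lam * K * B / D)\<^sup>2 / (2 * (sg\<^sup>2 * K\<^sup>2 / D)) = - (((r / K + lam * B / D)\<^sup>2 * D) / (2 * sg\<^sup>2))"
    using assms by (simp add: field_simps power2_eq_square)
  have 2: "(r / K + lam * B / D)\<^sup>2 * D = (r / K)\<^sup>2 * D + 2 * (r / K) * lam * B + lam\<^sup>2 * B\<^sup>2 / D"
    using assms(1,3) by (simp add: power2_eq_square field_simps)
  have 3: "(r / K)\<^sup>2 * D = (r / K)\<^sup>2 + lam * p2 * (r / K)\<^sup>2"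
    unfolding assms(2) by algebra
  have 4: "lam\<^sup>2 * B\<^sup>2 / (2 * sg\<^sup>2 * D) = (lam\<^sup>2 * B\<^sup>2 / D) / (2 * sg\<^sup>2)"
    by simp
  have "- (1 / (2 * sg\<^sup>2)) * s\<^sup>2 + - (lam / (2 * sg\<^sup>2)) * (T + 2 * s * B + s\<^sup>2 * p2)
     = - ((s\<^sup>2 + lam * p2 * s\<^sup>2 + 2 * s * lam * B + u) / (2 * sg\<^sup>2))
       + (- (lam / (2 * sg\<^sup>2)) * T + u / (2 * sg\<^sup>2))" for s u
    using assms(4) by (simp add: field_simps)
  then show ?thesis
    unfolding 1 2 3 4 .
qed

lemma gauss_prior_on_line:
  fixes \<theta>0 p x :: "real ^ 'm" and lam \<sigma> :: real
  assumes "\<sigma> > 0" and "K = 1 + p \<bullet> x" and "K \<noteq> 0" and "D = 1 + lam * (p \<bullet> p)" and "D > 0"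
  defines "\<theta> \<equiv> \<lambda>y. \<theta>0 + ((y - \<theta>0 \<bullet> x) / K) *\<^sub>R p"
  defines "s2 \<equiv> \<sigma>\<^sup>2 * K\<^sup>2 / D"
  defines "C \<equiv> sqrt (2 * pi * s2) / sqrt (2 * pi * \<sigma>\<^sup>2)
                * exp (- (lam / (2 * \<sigma>\<^sup>2)) * (\<theta>0 \<bullet> \<theta>0) + lam\<^sup>2 * (\<theta>0 \<bullet> p)\<^sup>2 / (2 * \<sigma>\<^sup>2 * D))"
  shows "gauss_model \<sigma> (\<theta> y) y x * prior_w lam \<sigma> (\<theta> y)
           = C * normal_density (\<theta>0 \<bullet> x - lam * K * (\<theta>0 \<bullet> p) / D) (sqrt s2) y"
proof -
  define r where "r = y - \<theta>0 \<bullet> x"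
  define E0 where "E0 = - (lam / (2 * \<sigma>\<^sup>2)) * (\<theta>0 \<bullet> \<theta>0) + lam\<^sup>2 * (\<theta>0 \<bullet> p)\<^sup>2 / (2 * \<sigma>\<^sup>2 * D)"
  define m where "m = \<theta>0 \<bullet> x - lam * K * (\<theta>0 \<bullet> p) / D"
  have s2_pos: "s2 > 0"
    unfolding s2_def using assms(1,3,5) by simp
  have "\<theta> y \<bullet> x = \<theta>0 \<bullet> x + (r / K) * (K - 1)"
    unfolding \<theta>_def r_def[symmetric] using assms(2) by (simp add: inner_add_left)
  then have residual: "y - \<theta> y \<bullet> x = r / K"
    unfolding r_def using assms(3) by (simp add: field_simps)
  have norm_sq: "(norm (\<theta> y))\<^sup>2 = \<theta>0 \<bullet> \<theta>0 + 2 * (r / K) * (\<theta>0 \<bullet> p) + (r / K)\<^sup>2 * (p \<bullet> p)"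
    unfolding \<theta>_def r_def[symmetric] power2_norm_eq_inner
    by (simp add: inner_add_left inner_add_right inner_commute[of p \<theta>0] power2_eq_square algebra_simps)
  have "gauss_model \<sigma> (\<theta> y) y x * prior_w lam \<sigma> (\<theta> y) = 1 / sqrt (2 * pi * \<sigma>\<^sup>2)
      * exp (- (1 / (2 * \<sigma>\<^sup>2)) * (r / K)\<^sup>2
             + - (lam / (2 * \<sigma>\<^sup>2)) * (\<theta>0 \<bullet> \<theta>0 + 2 * (r / K) * (\<theta>0 \<bullet> p) + (r / K)\<^sup>2 * (p \<bullet> p)))"
    unfolding gauss_model_def prior_w_def residual norm_sq
    by (simp add: exp_add exp_diff exp_minus field_simps)
  also have "\<dots> = 1 / sqrt (2 * pi * \<sigma>\<^sup>2) * exp (- (y - m)\<^sup>2 / (2 * s2) + E0)"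
  proof -
    have "y - m = r + lam * K * (\<theta>0 \<bullet> p) / D"
      unfolding m_def r_def by simp
    then show ?thesis
      unfolding s2_def E0_def using complete_square_exponent assms(1,3,4,5) by simp
  qed
  also have "\<dots> = C * normal_density m (sqrt s2) y"
    using s2_pos unfolding C_def E0_def[symmetric] normal_density_def
    by (simp add: exp_add[of E0, symmetric])
  finally show ?thesis
    unfolding m_def .
qed

lemma normalize_scaled_normal_density:
  assumes "\<And>y. g y = C * normal_density m s y" and "C \<noteq> 0" and "s > 0"
  shows "g y / (LBINT y. g y) = normal_density m s y"
  using assms integral_normal_density[of s m] by simp

theorem mainTheorem10:
  fixes X :: "real ^ 'm ^ 'n" and Y :: "real ^ 'n" and x :: "real ^ 'm"
    and lam \<sigma> :: real
  assumes "lam > 0" and "\<sigma> > 0"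
  defines "P \<equiv> matrix_inv (transpose X ** X + lam *\<^sub>R mat 1)"
  defines "K \<equiv> 1 + x \<bullet> (P *v x)"
  defines "\<theta>L \<equiv> P *v (transpose X *v Y)"
  defines "\<mu> \<equiv> lam * K * (\<theta>L \<bullet> (P *v x)) / (1 + lam * (x \<bullet> ((P ** P) *v x)))"
  defines "s2 \<equiv> \<sigma>\<^sup>2 * K\<^sup>2 / (1 + lam * (x \<bullet> ((P ** P) *v x)))"
  shows "\<forall>y. q_LpNML X Y lam \<sigma> x y = normal_density (\<theta>L \<bullet> x - \<mu>) (sqrt s2) y"
proof
  fix y
  define D where "D = 1 + lam * ((P *v x) \<bullet> (P *v x))"
  have P_ridge: "P = matrix_inv (ridge_gram X lam)"
    unfolding P_def ridge_gram_def ..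
  have K_ge: "K \<ge> 1" and K_eq: "K = 1 + (P *v x) \<bullet> x"
    unfolding K_def P_ridge using inner_ridge_gram_inv_nonneg[OF assms(1)] by (auto simp: inner_commute)
  have D_ge: "D \<ge> 1" and D_eq: "1 + lam * (x \<bullet> ((P ** P) *v x)) = D"
    unfolding D_def P_ridge using assms(1) inner_ridge_gram_inv_square[OF assms(1)] by auto
  have \<theta>y: "theta_y X Y x y' lam = \<theta>L + ((y' - \<theta>L \<bullet> x) / K) *\<^sub>R (P *v x)" for y'
    unfolding \<theta>L_def K_def P_ridge by (rule theta_y_ridge_closed_form[OF assms(1)])
  note line = gauss_prior_on_line[OF assms(2) K_eq _ D_def, of \<theta>L]
  show "q_LpNML X Y lam \<sigma> x y = normal_density (\<theta>L \<bullet> x - \<mu>) (sqrt s2) y"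
    unfolding q_LpNML_def \<theta>y \<mu>_def s2_def D_eq
    by (rule normalize_scaled_normal_density[OF line]) (use K_ge D_ge assms(2) in auto)
qed

end
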